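(* Let $\mathcal A=(Q,q_0,\{a,b\},\delta,F)$ be a probabilistic automaton with $q_0\notin F$, and let $\mathcal D$ be the MDP constructed from $\mathcal A$ as described in the context, with $s_1=a$ and $s_2=(a,q_0)$. Then for every general strategy $\alpha$ for $\mathcal D$, \[ d_\alpha(s_1,s_2)=\sum_{w\in\{a,b\}^*}\frac{1}{3^{|w|+1}}\Big(\big(1-\Pr_{\mathcal A}(w)\big)\,\alpha(s_1w\$)({\sf m}_y)+\Pr_{\mathcal A}(w)\,\alpha(s_1w\$)({\sf m}_x)\Big), \] where $d_\alpha$ denotes the probabilistic bisimilarity distance in the LMC $\mathcal D(\alpha)$ and, for $w=\sigma_1\cdots\sigma_n$, $s_1w\$$ denotes the path $a\,{\sf m}\,\sigma_1\,{\sf m}\,\sigma_2\cdots{\sf m}\,\sigma_n\,{\sf m}\,\$$ in $\mathcal D$.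
   Context: A probabilistic automaton is $\mathcal A=(Q,q_0,L,\delta,F)$ with finite state set $Q$, initial state $q_0$, finite alphabet $L$, $\delta:Q\times L\to\mathrm{Distr}(Q)$, and final states $F\subseteq Q$; $\delta$ extends to words by $\delta(q,\varepsilon)=\mathbf 1_q$ and $\delta(q,\sigma w)=\sum_{q'}\delta(q,\sigma)(q')\delta(q',w)$, and $\Pr_{\mathcal A}(w)=\sum_{q\in F}\delta(q_0,w)(q)$. An MDP is $(S,Act,L,\varphi,\ell)$ with finite $S,Act,L$, partial $\varphi:S\times Act\rightharpoonup\mathrm{Distr}(S)$ and labelling $\ell$; a path is $s_0{\sf m}_1s_1\cdots{\sf m}_ns_n$ with $\varphi(s_i,{\sf m}_{i+1})(s_{i+1})>0$; a general strategy maps each path to a distribution over the actions available at its last state; it induces the LMC $\mathcal D(\alpha)$ whose states are paths, with $\tau(\rho)(\rho{\sf m}t)=\alpha(\rho)({\sf m})\varphi({\sf last}(\rho),{\sf m})(t)$ and label of $\rho$ equal to the label of its last state (a state $s$ is identified with the one-state path $s$). The probabilistic bisimilarity distance of an LMC $(S,L,\tau,\ell)$ is the least fixed point of $\Delta(e)(s,t)=1$ if $\ell(s)\neq\ell(t)$, else $\min_{\omega}\sum_{u,v}\omega(u,v)e(u,v)$ over couplings $\omega\in\mathrm{Distr}(S\times S)$ with marginals $\tau(s),\tau(t)$. Construction of $\mathcal D$: actions $\{{\sf m},{\sf m}_x,{\sf m}_y\}$, labels $\{a,b,\$,x,y\}$; two disjoint parts. Part 1 has states $a,b,\$,x,y$,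 each labelled by its own name; $a$ and $b$ each have only action ${\sf m}$ going to each of $a,b,\$$ with probability $1/3$; $\$$ has actions ${\sf m}_x$ (to $x$ with probability 1) and ${\sf m}_y$ (to $y$ with probability 1); $x,y$ are sinks (action ${\sf m}$). Part 2 has states $(\sigma,q)$ for $\sigma\in\{a,b\}$, $q\in Q$, labelled $\sigma$, and states $\$_x,\$_y$ (labelled $\$$), $x'$ (labelled $x$), $y'$ (labelled $y$), all with only action ${\sf m}$: $(\sigma,q)$ goes to $(a,q')$ with probability $\frac13\delta(q,a)(q')$, to $(b,q')$ with probability $\frac13\delta(q,b)(q')$, and with probability $\frac13$ to $\$_x$ if $q\notin F$ and to $\$_y$ if $q\in F$; $\$_x\to x'$, $\$_y\to y'$ with probability 1; $x',y'$ are sinks. *)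

theory Defs
  imports "HOL-Probability.Probability"
begin

datatype letter = La | Lb

fun delta_word :: "('q \<Rightarrow> letter \<Rightarrow> 'q pmf) \<Rightarrow> 'q \<Rightarrow> letter list \<Rightarrow> 'q pmf" where
  "delta_word \<delta> q [] = return_pmf q"
| "delta_word \<delta> q (\<sigma> # w) = bind_pmf (\<delta> q \<sigma>) (\<lambda>q'. delta_word \<delta> q' w)"

definition PA_Pr :: "'q \<Rightarrow> ('q \<Rightarrow> letter \<Rightarrow> 'q pmf) \<Rightarrow> 'q set \<Rightarrow> letter list \<Rightarrow> real" where
  "PA_Pr q0 \<delta> F w = (\<Sum>q\<in>F. pmf (delta_word \<delta> q0 w) q)"

text \<open>An MDP is given by a partial transition function phi and a labelling ell.
  A path s0 m1 s1 ... mn sn is represented as (s0, [(m1,s1),...,(mn,sn)]).\<close>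

type_synonym ('s, 'act) path = "'s \<times> ('act \<times> 's) list"

definition path_last :: "('s, 'act) path \<Rightarrow> 's" where
  "path_last \<rho> = (if snd \<rho> = [] then fst \<rho> else snd (last (snd \<rho>)))"

definition path_ext :: "('s, 'act) path \<Rightarrow> 'act \<Rightarrow> 's \<Rightarrow> ('s, 'act) path" where
  "path_ext \<rho> m t = (fst \<rho>, snd \<rho> @ [(m, t)])"

fun valid_from :: "('s \<Rightarrow> 'act \<Rightarrow> 's pmf option) \<Rightarrow> 's \<Rightarrow> ('act \<times> 's) list \<Rightarrow> bool" where
  "valid_from \<phi> s [] = True"
| "valid_from \<phi> s ((m, t) # xs) =
     (case \<phi> s m of None \<Rightarrow> False | Some \<mu> \<Rightarrow> pmf \<mu> t > 0 \<and> valid_from \<phi> t xs)"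

definition is_path :: "('s \<Rightarrow> 'act \<Rightarrow> 's pmf option) \<Rightarrow> ('s, 'act) path \<Rightarrow> bool" where
  "is_path \<phi> \<rho> = valid_from \<phi> (fst \<rho>) (snd \<rho>)"

definition is_strategy ::
  "('s \<Rightarrow> 'act \<Rightarrow> 's pmf option) \<Rightarrow> (('s, 'act) path \<Rightarrow> 'act pmf) \<Rightarrow> bool" where
  "is_strategy \<phi> \<alpha> = (\<forall>\<rho>. is_path \<phi> \<rho> \<longrightarrow> set_pmf (\<alpha> \<rho>) \<subseteq> {m. \<phi> (path_last \<rho>) m \<noteq> None})"

definition strat_tau ::
  "('s \<Rightarrow> 'act \<Rightarrow> 's pmf option) \<Rightarrow> (('s, 'act) path \<Rightarrow> 'act pmf) \<Rightarrow> ('s, 'act) path \<Rightarrow> ('s, 'act) path pmf" where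
  "strat_tau \<phi> \<alpha> \<rho> =
     bind_pmf (\<alpha> \<rho>) (\<lambda>m. map_pmf (\<lambda>t. path_ext \<rho> m t) (the (\<phi> (path_last \<rho>) m)))"

definition strat_label :: "('s \<Rightarrow> 'l) \<Rightarrow> ('s, 'act) path \<Rightarrow> 'l" where
  "strat_label lbl \<rho> = lbl (path_last \<rho>)"

definition couplings :: "'a pmf \<Rightarrow> 'a pmf \<Rightarrow> ('a \<times> 'a) pmf set" where
  "couplings \<mu> \<nu> = {\<omega>. map_pmf fst \<omega> = \<mu> \<and> map_pmf snd \<omega> = \<nu>}"

definition bisim_Delta ::
  "('a \<Rightarrow> 'a pmf) \<Rightarrow> ('a \<Rightarrow> 'l) \<Rightarrow> ('a \<times> 'a \<Rightarrow> ennreal) \<Rightarrow> ('a \<times> 'a \<Rightarrow> ennreal)" where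
  "bisim_Delta \<tau> lbl e = (\<lambda>(s, t). if lbl s \<noteq> lbl t then 1
      else (INF \<omega>\<in>couplings (\<tau> s) (\<tau> t). \<integral>\<^sup>+ uv. e uv \<partial>measure_pmf \<omega>))"

definition bisim_dist :: "('a \<Rightarrow> 'a pmf) \<Rightarrow> ('a \<Rightarrow> 'l) \<Rightarrow> 'a \<Rightarrow> 'a \<Rightarrow> ennreal" where
  "bisim_dist \<tau> lbl s t = lfp (bisim_Delta \<tau> lbl) (s, t)"

datatype act = Mm | Mx | My

datatype lab = LabA | LabB | LabDollar | LabX | LabY

text \<open>Part 1: A1, B1, Dol1, X1, Y1 (the states a, b, \$, x, y).
  Part 2: Sym sigma q (the states (sigma,q)), DolX, DolY, X2 (= x'), Y2 (= y').\<close>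

datatype 'q dstate = A1 | B1 | Dol1 | X1 | Y1 | Sym letter 'q | DolX | DolY | X2 | Y2

definition letter_lab :: "letter \<Rightarrow> lab" where
  "letter_lab \<sigma> = (case \<sigma> of La \<Rightarrow> LabA | Lb \<Rightarrow> LabB)"

fun D_label :: "'q dstate \<Rightarrow> lab" where
  "D_label A1 = LabA"
| "D_label B1 = LabB"
| "D_label Dol1 = LabDollar"
| "D_label X1 = LabX"
| "D_label Y1 = LabY"
| "D_label (Sym \<sigma> q) = letter_lab \<sigma>"
| "D_label DolX = LabDollar"
| "D_label DolY = LabDollar"
| "D_label X2 = LabX"
| "D_label Y2 = LabY"

fun D_phi :: "('q \<Rightarrow> letter \<Rightarrow> 'q pmf) \<Rightarrow> 'q set \<Rightarrow> 'q dstate \<Rightarrow> act \<Rightarrow> 'q dstate pmf option" where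
  "D_phi \<delta> F A1 m = (if m = Mm then Some (pmf_of_set {A1, B1, Dol1}) else None)"
| "D_phi \<delta> F B1 m = (if m = Mm then Some (pmf_of_set {A1, B1, Dol1}) else None)"
| "D_phi \<delta> F Dol1 m = (if m = Mx then Some (return_pmf X1)
                        else if m = My then Some (return_pmf Y1) else None)"
| "D_phi \<delta> F X1 m = (if m = Mm then Some (return_pmf X1) else None)"
| "D_phi \<delta> F Y1 m = (if m = Mm then Some (return_pmf Y1) else None)"
| "D_phi \<delta> F (Sym \<sigma> q) m = (if m = Mm then Some
      (bind_pmf (pmf_of_set {Some La, Some Lb, None})
        (\<lambda>c. case c of
               Some \<sigma>' \<Rightarrow> map_pmf (Sym \<sigma>') (\<delta> q \<sigma>')
             | None \<Rightarrow> return_pmf (if q \<in> F then DolY else DolX)))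
      else None)"
| "D_phi \<delta> F DolX m = (if m = Mm then Some (return_pmf X2) else None)"
| "D_phi \<delta> F DolY m = (if m = Mm then Some (return_pmf Y2) else None)"
| "D_phi \<delta> F X2 m = (if m = Mm then Some (return_pmf X2) else None)"
| "D_phi \<delta> F Y2 m = (if m = Mm then Some (return_pmf Y2) else None)"

definition letter_state :: "letter \<Rightarrow> 'q dstate" where
  "letter_state \<sigma> = (case \<sigma> of La \<Rightarrow> A1 | Lb \<Rightarrow> B1)"

definition s1_word_dollar :: "letter list \<Rightarrow> ('q dstate, act) path" where
  "s1_word_dollar w = (A1, map (\<lambda>\<sigma>. (Mm, letter_state \<sigma>)) w @ [(Mm, Dol1)])"

end

theory Submission
  imports Defs
begin

text \<open>Under any strategy, the part-1 path \<open>s\<^sub>1 w\<close> and a part-2 path ending in \<open>(last w, q)\<close>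
  move in lock-step: each goes to an \<open>a\<close>-state, a \<open>b\<close>-state or a \<open>$\<close>-state with probability 1/3,
  and pairing successors with equal labels is an optimal coupling. The two \<open>$\<close>-states are then
  at distance \<open>c(w, q)\<close>, the probability that the strategy moves to the sink whose label does not
  match (the \<open>x\<close>-sinks, resp. the \<open>y\<close>-sinks, are at distance 0). Hence the distances satisfy
  \<open>d(w, q) = c(w, q)/3 + (1/3) \<Sum>\<sigma> q'. \<delta>(q, \<sigma>)(q') d(w\<sigma>, q')\<close>. The series on the right-hand
  side of the theorem solves the same recursion, and since it is a 2/3-contraction on functions
  bounded by 1, the two coincide.\<close>

section \<open>Couplings and the bisimilarity distance\<close>

lemma mono_bisim_Delta: "mono (bisim_Delta \<tau> lbl)"
  unfolding mono_def le_fun_def bisim_Delta_def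
  by (fastforce intro!: INF_mono nn_integral_mono)

lemma pair_pmf_in_couplings: "pair_pmf \<mu> \<nu> \<in> couplings \<mu> \<nu>"
  by (simp add: couplings_def map_fst_pair_pmf map_snd_pair_pmf)

lemma bisim_Delta_le_1:
  assumes "\<And>p. e p \<le> 1"
  shows "bisim_Delta \<tau> lbl e (s, t) \<le> 1"
proof -
  have "(INF \<omega>\<in>couplings (\<tau> s) (\<tau> t). \<integral>\<^sup>+ uv. e uv \<partial>measure_pmf \<omega>)
      \<le> \<integral>\<^sup>+ uv. e uv \<partial>measure_pmf (pair_pmf (\<tau> s) (\<tau> t))"
    by (rule INF_lower) (rule pair_pmf_in_couplings)
  also have "\<dots> \<le> \<integral>\<^sup>+ uv. 1 \<partial>measure_pmf (pair_pmf (\<tau> s) (\<tau> t))"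
    by (rule nn_integral_mono) (rule assms)
  finally show ?thesis
    by (simp add: bisim_Delta_def)
qed

lemma lfp_bisim_Delta_le_1: "lfp (bisim_Delta \<tau> lbl) p \<le> 1"
proof -
  have "lfp (bisim_Delta \<tau> lbl) \<le> (\<lambda>_. 1)"
    by (rule lfp_lowerbound) (auto simp: le_fun_def intro: bisim_Delta_le_1)
  then show ?thesis
    by (cases p) (simp add: le_fun_def)
qed

lemma lfp_bisim_Delta_unfold:
  "lfp (bisim_Delta \<tau> lbl) p = bisim_Delta \<tau> lbl (lfp (bisim_Delta \<tau> lbl)) p"
  by (subst lfp_unfold[OF mono_bisim_Delta]) (rule refl)

lemma lfp_bisim_Delta_label_neq: "lbl s \<noteq> lbl t \<Longrightarrow> lfp (bisim_Delta \<tau> lbl) (s, t) = 1"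
  by (subst lfp_bisim_Delta_unfold) (simp add: bisim_Delta_def)

lemma bisim_Delta_label_eq:
  "lbl s = lbl t \<Longrightarrow> bisim_Delta \<tau> lbl e (s, t) =
     (INF \<omega>\<in>couplings (\<tau> s) (\<tau> t). \<integral>\<^sup>+ uv. e uv \<partial>measure_pmf \<omega>)"
  by (simp add: bisim_Delta_def)

lemma couplings_return_pmf: "couplings \<mu> (return_pmf v) = {map_pmf (\<lambda>u. (u, v)) \<mu>}"
proof (intro equalityI subsetI)
  fix \<omega> assume "\<omega> \<in> couplings \<mu> (return_pmf v)"
  then have fst: "map_pmf fst \<omega> = \<mu>" and snd: "map_pmf snd \<omega> = return_pmf v"
    by (auto simp: couplings_def)
  have "\<omega> = map_pmf (\<lambda>x. (fst x, v)) \<omega>"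
  proof (rule map_pmf_idI[symmetric])
    fix x assume "x \<in> set_pmf \<omega>"
    then have "snd x \<in> set_pmf (map_pmf snd \<omega>)" by simp
    then show "(fst x, v) = x" by (simp add: snd prod_eq_iff)
  qed
  also have "\<dots> = map_pmf (\<lambda>u. (u, v)) \<mu>"
    by (simp add: fst[symmetric] pmf.map_comp o_def)
  finally show "\<omega> \<in> {map_pmf (\<lambda>u. (u, v)) \<mu>}" by simp
qed (simp add: couplings_def pmf.map_comp o_def)

lemma INF_couplings_return_pmf:
  "(INF \<omega>\<in>couplings \<mu> (return_pmf v). \<integral>\<^sup>+ uv. e uv \<partial>measure_pmf \<omega>) = (\<integral>\<^sup>+ u. e (u, v) \<partial>measure_pmf \<mu>)"
  by (simp add: couplings_return_pmf)

lemma INF_couplings_le_nn_integral: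
  assumes "map_pmf f \<nu> = \<mu>"
  shows "(INF \<omega>\<in>couplings \<mu> \<nu>. \<integral>\<^sup>+ uv. e uv \<partial>measure_pmf \<omega>) \<le> (\<integral>\<^sup>+ v. e (f v, v) \<partial>measure_pmf \<nu>)"
proof -
  have "map_pmf (\<lambda>v. (f v, v)) \<nu> \<in> couplings \<mu> \<nu>"
    using assms by (simp add: couplings_def pmf.map_comp o_def)
  then show ?thesis
    by (rule INF_lower2) simp
qed

lemma nn_integral_le_INF_couplings:
  assumes "\<And>u v. u \<in> set_pmf \<mu> \<Longrightarrow> v \<in> set_pmf \<nu> \<Longrightarrow> L v \<le> e (u, v)"
  shows "(\<integral>\<^sup>+ v. L v \<partial>measure_pmf \<nu>) \<le> (INF \<omega>\<in>couplings \<mu> \<nu>. \<integral>\<^sup>+ uv. e uv \<partial>measure_pmf \<omega>)"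
proof (rule INF_greatest)
  fix \<omega> assume "\<omega> \<in> couplings \<mu> \<nu>"
  then have fst: "map_pmf fst \<omega> = \<mu>" and snd: "map_pmf snd \<omega> = \<nu>"
    by (auto simp: couplings_def)
  have "(\<integral>\<^sup>+ v. L v \<partial>measure_pmf \<nu>) = (\<integral>\<^sup>+ uv. L (snd uv) \<partial>measure_pmf \<omega>)"
    by (simp flip: snd)
  also have "\<dots> \<le> (\<integral>\<^sup>+ uv. e uv \<partial>measure_pmf \<omega>)"
  proof (rule nn_integral_mono_AE, rule AE_pmfI)
    fix uv assume "uv \<in> set_pmf \<omega>"
    then have "fst uv \<in> set_pmf \<mu>" "snd uv \<in> set_pmf \<nu>"
      using fst snd by force+
    then show "L (snd uv) \<le> e uv"
      using assms[of "fst uv" "snd uv"] by simp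
  qed
  finally show "(\<integral>\<^sup>+ v. L v \<partial>measure_pmf \<nu>) \<le> (\<integral>\<^sup>+ uv. e uv \<partial>measure_pmf \<omega>)" .
qed

section \<open>A contraction principle\<close>

lemma le_by_contraction:
  fixes f g a :: "'a \<Rightarrow> ennreal" and w :: "'a \<Rightarrow> 'b \<Rightarrow> ennreal" and ch :: "'a \<Rightarrow> 'b \<Rightarrow> 'a"
  assumes "0 \<le> k" "k < 1"
    and weights: "\<And>x. x \<in> P \<Longrightarrow> (\<Sum>y\<in>B. w x y) \<le> ennreal k"
    and closed: "\<And>x y. x \<in> P \<Longrightarrow> y \<in> B \<Longrightarrow> w x y \<noteq> 0 \<Longrightarrow> ch x y \<in> P"
    and f_le_1: "\<And>x. x \<in> P \<Longrightarrow> f x \<le> 1"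
    and f_sub: "\<And>x. x \<in> P \<Longrightarrow> f x \<le> a x + (\<Sum>y\<in>B. w x y * f (ch x y))"
    and g_super: "\<And>x. x \<in> P \<Longrightarrow> a x + (\<Sum>y\<in>B. w x y * g (ch x y)) \<le> g x"
    and "x \<in> P"
  shows "f x \<le> g x"
proof -
  \<comment> \<open>The largest excess \<open>D\<close> of \<open>f\<close> over \<open>g\<close> satisfies \<open>D \<le> k D\<close> and is finite since \<open>f \<le> 1\<close>.\<close>
  define D where "D = (SUP z\<in>P. f z - g z)"
  have f_le_g_D: "f z \<le> g z + D" if "z \<in> P" for z
  proof -
    have "f z - g z \<le> D" unfolding D_def using that by (rule SUP_upper)
    then show ?thesis by (simp add: ennreal_minus_le_iff)
  qed
  have D_le_1: "D \<le> 1"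
    unfolding D_def by (rule SUP_least) (metis diff_le_self_ennreal f_le_1 order_trans)
  have "D \<le> ennreal k * D"
    unfolding D_def
  proof (rule SUP_least)
    fix z assume z: "z \<in> P"
    have "w z y * f (ch z y) \<le> w z y * (g (ch z y) + D)" if "y \<in> B" for y
    proof (cases "w z y = 0")
      case False
      then show ?thesis
        using closed[OF z that] f_le_g_D by (simp add: mult_left_mono)
    qed simp
    then have "(\<Sum>y\<in>B. w z y * f (ch z y)) \<le> (\<Sum>y\<in>B. w z y * (g (ch z y) + D))"
      by (rule sum_mono)
    also have "\<dots> = (\<Sum>y\<in>B. w z y * g (ch z y)) + (\<Sum>y\<in>B. w z y) * D"
      by (simp add: distrib_left sum.distrib sum_distrib_right)
    also have "\<dots> \<le> (\<Sum>y\<in>B. w z y * g (ch z y)) + ennreal k * D"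
      by (intro add_left_mono mult_right_mono weights z) simp
    finally have "f z \<le> a z + (\<Sum>y\<in>B. w z y * g (ch z y)) + ennreal k * D"
      using f_sub[OF z] by (simp add: add.assoc add_left_mono order_trans)
    also have "\<dots> \<le> g z + ennreal k * D"
      using g_super[OF z] by (rule add_right_mono)
    finally have "f z \<le> g z + ennreal k * D" .
    moreover have "f z \<noteq> \<top>"
      using f_le_1[OF z] by (auto simp: top_unique)
    ultimately show "f z - g z \<le> ennreal k * (SUP z\<in>P. f z - g z)"
      by (simp add: D_def ennreal_minus_le_iff)
  qed
  moreover obtain r where r: "D = ennreal r" "0 \<le> r"
    using D_le_1 by (cases D) (auto simp: top_unique)
  ultimately have "r \<le> k * r"
    using \<open>0 \<le> k\<close> by (simp add: ennreal_mult'[symmetric] ennreal_le_iff mult_nonneg_nonneg)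
  then have "D = 0"
    using r \<open>k < 1\<close> by (simp add: mult_le_cancel_right1 not_le)
  then show ?thesis
    using f_le_g_D[OF \<open>x \<in> P\<close>] by simp
qed

lemma eq_by_contraction:
  fixes f g a :: "'a \<Rightarrow> ennreal" and w :: "'a \<Rightarrow> 'b \<Rightarrow> ennreal" and ch :: "'a \<Rightarrow> 'b \<Rightarrow> 'a"
  assumes "0 \<le> k" "k < 1"
    and weights: "\<And>x. x \<in> P \<Longrightarrow> (\<Sum>y\<in>B. w x y) \<le> ennreal k"
    and closed: "\<And>x y. x \<in> P \<Longrightarrow> y \<in> B \<Longrightarrow> w x y \<noteq> 0 \<Longrightarrow> ch x y \<in> P"
    and f_rec: "\<And>x. x \<in> P \<Longrightarrow> f x = a x + (\<Sum>y\<in>B. w x y * f (ch x y))"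
    and g_rec: "\<And>x. x \<in> P \<Longrightarrow> g x = a x + (\<Sum>y\<in>B. w x y * g (ch x y))"
    and "\<And>x. x \<in> P \<Longrightarrow> f x \<le> 1" "\<And>x. x \<in> P \<Longrightarrow> g x \<le> 1"
    and "x \<in> P"
  shows "f x = g x"
proof (rule antisym)
  show "f x \<le> g x"
    by (rule le_by_contraction[OF assms(1-3) closed assms(7)
          f_rec[THEN eq_refl] g_rec[symmetric, THEN eq_refl] assms(9)])
  show "g x \<le> f x"
    by (rule le_by_contraction[OF assms(1-3) closed assms(8)
          g_rec[THEN eq_refl] f_rec[symmetric, THEN eq_refl] assms(9)])
qed

section \<open>Weighted series over words\<close>

lemma infsum_cmult_ennreal: "(\<Sum>\<^sub>\<infinity>x\<in>A. c * f x) = (c :: ennreal) * (\<Sum>\<^sub>\<infinity>x\<in>A. f x)"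
  by (simp add: nonneg_infsum_complete SUP_mult_left_ennreal sum_distrib_left)

lemma infsum_sum_ennreal:
  fixes g :: "'a \<Rightarrow> 'b \<Rightarrow> ennreal"
  assumes "finite S"
  shows "(\<Sum>\<^sub>\<infinity>w. \<Sum>x\<in>S. g x w) = (\<Sum>x\<in>S. \<Sum>\<^sub>\<infinity>w. g x w)"
  using assms
proof (induction S rule: finite_induct)
  case (insert x S)
  then show ?case
    by (subst sum.insert, simp_all, subst infsum_add)
      (simp_all add: nonneg_summable_on_complete)
qed simp

lemma sum_letter_times:
  "(\<Sum>(\<sigma>, x)\<in>{La, Lb} \<times> A. h \<sigma> x) = (\<Sum>x\<in>A. h La x) + (\<Sum>x\<in>A. h Lb x)"
  by (simp add: sum.cartesian_product[symmetric])

lemma UNIV_letter_list: "(UNIV :: letter list set) = insert [] (range (Cons La) \<union> range (Cons Lb))"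
proof -
  have "w \<in> insert [] (range (Cons La) \<union> range (Cons Lb))" for w :: "letter list"
    by (cases w) (auto intro: letter.exhaust)
  then show ?thesis by auto
qed

lemma letter_lists_length_le_Suc:
  "{w :: letter list. length w \<le> Suc n} =
     insert [] (Cons La ` {w. length w \<le> n} \<union> Cons Lb ` {w. length w \<le> n})"
proof -
  have "w \<in> insert [] (Cons La ` {w. length w \<le> n} \<union> Cons Lb ` {w. length w \<le> n})"
    if "length w \<le> Suc n" for w :: "letter list"
    using that by (cases w) (auto intro: letter.exhaust)
  then show ?thesis by auto
qed

lemma finite_letter_lists_length_le: "finite {w :: letter list. length w \<le> n}"
  by (induction n) (simp_all add: letter_lists_length_le_Suc)

lemma sum_word_weights_length_le:
  "(\<Sum>w\<in>{w :: letter list. length w \<le> n}. 1 / 3 ^ (length w + 1) :: real) \<le> 1"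
proof -
  define f where "f w = (1 / 3 ^ (length w + 1) :: real)" for w :: "letter list"
  have "(\<Sum>w\<in>{w. length w \<le> n}. f w) \<le> 1"
  proof (induction n)
    case 0
    have "{w :: letter list. length w \<le> 0} = {[]}" by auto
    then show ?case by (simp add: f_def)
  next
    case (Suc n)
    let ?W = "{w :: letter list. length w \<le> n}"
    have Cons_sum: "(\<Sum>w\<in>Cons \<sigma> ` ?W. f w) = (\<Sum>w\<in>?W. f w) / 3" for \<sigma>
      by (subst sum.reindex) (simp_all add: f_def sum_divide_distrib)
    have "(\<Sum>w\<in>{w. length w \<le> Suc n}. f w) = f [] + ((\<Sum>w\<in>Cons La ` ?W. f w) + (\<Sum>w\<in>Cons Lb ` ?W. f w))"
      unfolding letter_lists_length_le_Suc
      by (subst sum.insert) (auto simp: finite_letter_lists_length_le intro!: sum.union_disjoint)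
    also have "\<dots> \<le> 1"
      using Suc.IH unfolding Cons_sum by (simp add: f_def)
    finally show ?case .
  qed
  then show ?thesis by (simp add: f_def)
qed

lemma infsum_word_weights_le_1: "(\<Sum>\<^sub>\<infinity>w::letter list. ennreal (1 / 3 ^ (length w + 1))) \<le> 1"
proof (rule infsum_le_finite_sums)
  fix W :: "letter list set" assume "finite W"
  then have sub: "W \<subseteq> {w. length w \<le> Max (length ` W)}" by auto
  have "(\<Sum>w\<in>W. 1 / 3 ^ (length w + 1) :: real)
      \<le> (\<Sum>w\<in>{w :: letter list. length w \<le> Max (length ` W)}. 1 / 3 ^ (length w + 1))"
    using sub by (intro sum_mono2 finite_letter_lists_length_le) auto
  also have "\<dots> \<le> 1"
    by (rule sum_word_weights_length_le)
  finally have "(\<Sum>w\<in>W. 1 / 3 ^ (length w + 1) :: real) \<le> 1" .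
  then show "(\<Sum>w\<in>W. ennreal (1 / 3 ^ (length w + 1))) \<le> 1"
    by (simp add: sum_ennreal ennreal_le_1)
qed (simp add: nonneg_summable_on_complete)

lemma nn_integral_measure_pmf_UNIV:
  "(\<integral>\<^sup>+x. f x \<partial>measure_pmf M) = (\<Sum>x\<in>UNIV. ennreal (pmf M x) * f (x :: 'a :: finite))"
  by (simp add: nn_integral_measure_pmf nn_integral_count_space_finite)

lemma sum_ennreal_pmf_UNIV: "(\<Sum>x\<in>UNIV. ennreal (pmf M (x :: 'a :: finite))) = 1"
  using nn_integral_measure_pmf_UNIV[where f = "\<lambda>_. 1" and M = M] by simp

text \<open>\<open>cost_series \<delta> c u q\<close> is the expected cost when, starting in state \<open>q\<close> after the prefix \<open>u\<close>,
  each step reads \<open>a\<close>, reads \<open>b\<close> or stops, each with probability 1/3, and the cost \<open>c (u @ w) q'\<close>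
  is paid in the state \<open>q'\<close> reached when stopping after \<open>w\<close>.\<close>

definition cost_term ::
    "('q \<Rightarrow> letter \<Rightarrow> 'q pmf) \<Rightarrow> (letter list \<Rightarrow> 'q \<Rightarrow> ennreal) \<Rightarrow> letter list \<Rightarrow> 'q \<Rightarrow> letter list \<Rightarrow> ennreal" where
  "cost_term \<delta> c u q w = ennreal (1 / 3 ^ (length w + 1)) *
      (\<Sum>q'\<in>UNIV. ennreal (pmf (delta_word \<delta> q w) q') * c (u @ w) q')"

definition cost_series ::
    "('q \<Rightarrow> letter \<Rightarrow> 'q pmf) \<Rightarrow> (letter list \<Rightarrow> 'q \<Rightarrow> ennreal) \<Rightarrow> letter list \<Rightarrow> 'q \<Rightarrow> ennreal" where
  "cost_series \<delta> c u q = (\<Sum>\<^sub>\<infinity>w. cost_term \<delta> c u q w)"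

lemma cost_term_Nil: "cost_term \<delta> c u q [] = ennreal (1/3) * c u (q :: 'q :: finite)"
proof -
  have "(\<Sum>q'\<in>UNIV. ennreal (pmf (return_pmf q) q') * c u q') = (\<Sum>q'\<in>UNIV. if q' = q then c u q' else 0)"
    by (rule sum.cong) (auto simp: pmf_return)
  then show ?thesis
    by (simp add: cost_term_def)
qed

lemma cost_term_Cons:
  "cost_term \<delta> c u (q :: 'q :: finite) (\<sigma> # w) =
     ennreal (1/3) * (\<Sum>x\<in>UNIV. ennreal (pmf (\<delta> q \<sigma>) x) * cost_term \<delta> c (u @ [\<sigma>]) x w)"
proof -
  let ?p = "\<lambda>x. ennreal (pmf (\<delta> q \<sigma>) x)" and ?r = "\<lambda>x q'. ennreal (pmf (delta_word \<delta> x w) q')"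
  have weight: "ennreal (1 / 3 ^ (length (\<sigma> # w) + 1)) = ennreal (1/3) * ennreal (1 / 3 ^ (length w + 1))"
    by (simp add: ennreal_mult[symmetric])
  have "(\<Sum>q'\<in>UNIV. ennreal (pmf (delta_word \<delta> q (\<sigma> # w)) q') * c (u @ \<sigma> # w) q')
      = (\<Sum>q'\<in>UNIV. \<Sum>x\<in>UNIV. ?p x * (?r x q' * c (u @ \<sigma> # w) q'))"
    by (simp add: ennreal_pmf_bind nn_integral_measure_pmf_UNIV sum_distrib_right mult.assoc)
  also have "\<dots> = (\<Sum>x\<in>UNIV. ?p x * (\<Sum>q'\<in>UNIV. ?r x q' * c (u @ \<sigma> # w) q'))"
    by (subst sum.swap) (simp add: sum_distrib_left)
  finally show ?thesis
    unfolding cost_term_def weight by (simp add: sum_distrib_left mult_ac)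
qed

lemma cost_series_unfold:
  "cost_series \<delta> c u (q :: 'q :: finite) = ennreal (1/3) * c u q +
     (\<Sum>(\<sigma>, x)\<in>{La, Lb} \<times> UNIV. ennreal (1/3) * ennreal (pmf (\<delta> q \<sigma>) x) * cost_series \<delta> c (u @ [\<sigma>]) x)"
proof -
  have Cons: "(\<Sum>\<^sub>\<infinity>w\<in>range (Cons \<sigma>). cost_term \<delta> c u q w) =
      (\<Sum>x\<in>UNIV. ennreal (1/3) * ennreal (pmf (\<delta> q \<sigma>) x) * cost_series \<delta> c (u @ [\<sigma>]) x)" for \<sigma>
  proof -
    have "(\<Sum>\<^sub>\<infinity>w\<in>range (Cons \<sigma>). cost_term \<delta> c u q w) = (\<Sum>\<^sub>\<infinity>w. cost_term \<delta> c u q (\<sigma> # w))"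
      by (subst infsum_reindex) (auto simp: o_def)
    also have "\<dots> = ennreal (1/3) * (\<Sum>x\<in>UNIV. ennreal (pmf (\<delta> q \<sigma>) x) * cost_series \<delta> c (u @ [\<sigma>]) x)"
      by (simp add: cost_term_Cons infsum_cmult_ennreal infsum_sum_ennreal cost_series_def)
    finally show ?thesis
      by (simp add: sum_distrib_left mult.assoc)
  qed
  have summable: "cost_term \<delta> c u q summable_on A" for A
    by (simp add: nonneg_summable_on_complete)
  have "cost_series \<delta> c u q =
      (\<Sum>\<^sub>\<infinity>w\<in>insert [] (range (Cons La) \<union> range (Cons Lb)). cost_term \<delta> c u q w)"
    by (simp add: cost_series_def UNIV_letter_list[symmetric])
  also have "\<dots> = cost_term \<delta> c u q [] +
      ((\<Sum>\<^sub>\<infinity>w\<in>range (Cons La). cost_term \<delta> c u q w) + (\<Sum>\<^sub>\<infinity>w\<in>range (Cons Lb). cost_term \<delta> c u q w))"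
    using infsum_Un_disjoint[OF summable summable, of "range (Cons La)" "range (Cons Lb)"]
    by (subst infsum_insert) (auto simp: summable)
  finally show ?thesis
    by (simp add: Cons cost_term_Nil sum_letter_times)
qed

lemma cost_series_le_1:
  assumes "\<And>v q. c v q \<le> 1"
  shows "cost_series \<delta> c u (q :: 'q :: finite) \<le> 1"
proof -
  have "cost_term \<delta> c u q w \<le> ennreal (1 / 3 ^ (length w + 1))" for w
  proof -
    have "(\<Sum>q'\<in>UNIV. ennreal (pmf (delta_word \<delta> q w) q') * c (u @ w) q') \<le> (\<Sum>q'\<in>UNIV. ennreal (pmf (delta_word \<delta> q w) q'))"
      by (intro sum_mono) (metis assms mult.right_neutral mult_left_mono zero_le)
    then show ?thesis
      unfolding cost_term_def sum_ennreal_pmf_UNIV by (metis mult.right_neutral mult_left_mono zero_le)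
  qed
  then have "cost_series \<delta> c u q \<le> (\<Sum>\<^sub>\<infinity>w::letter list. ennreal (1 / 3 ^ (length w + 1)))"
    unfolding cost_series_def by (intro infsum_mono) (simp_all add: nonneg_summable_on_complete)
  also have "\<dots> \<le> 1"
    by (rule infsum_word_weights_le_1)
  finally show ?thesis .
qed

section \<open>Paths of the MDP\<close>

lemma path_last_path_ext [simp]: "path_last (path_ext \<rho> m t) = t"
  by (simp add: path_last_def path_ext_def)

lemma valid_from_snoc:
  "valid_from \<phi> s (xs @ [(m, t)]) \<longleftrightarrow> valid_from \<phi> s xs \<and>
     (case \<phi> (path_last (s, xs)) m of None \<Rightarrow> False | Some \<mu> \<Rightarrow> pmf \<mu> t > 0)"
proof (induction xs arbitrary: s)
  case Nil
  then show ?case by (simp add: path_last_def split: option.splits)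
next
  case (Cons x xs)
  then show ?case by (cases x) (auto simp: path_last_def split: option.splits)
qed

lemma is_path_Nil [simp]: "is_path \<phi> (s, [])"
  by (simp add: is_path_def)

lemma is_path_path_ext:
  assumes "is_path \<phi> \<rho>" "\<phi> (path_last \<rho>) m = Some \<mu>" "t \<in> set_pmf \<mu>"
  shows "is_path \<phi> (path_ext \<rho> m t)"
  using assms unfolding is_path_def path_ext_def
  by (cases \<rho>) (simp add: valid_from_snoc pmf_positive)

definition word_path :: "letter list \<Rightarrow> ('q dstate, act) path" where
  "word_path u = (A1, map (\<lambda>\<sigma>. (Mm, letter_state \<sigma>)) u)"

lemma word_path_snoc: "word_path (u @ [\<sigma>]) = path_ext (word_path u) Mm (letter_state \<sigma>)"
  by (simp add: word_path_def path_ext_def)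

lemma s1_word_dollar_eq: "s1_word_dollar u = path_ext (word_path u) Mm Dol1"
  by (simp add: word_path_def path_ext_def s1_word_dollar_def)

lemma path_last_s1_word_dollar [simp]: "path_last (s1_word_dollar u) = Dol1"
  by (simp add: s1_word_dollar_eq)

lemma path_last_word_path: "path_last (word_path u) = letter_state (last (La # u))"
  by (induction u rule: rev_induct) (auto simp: word_path_def path_last_def letter_state_def)

lemma D_label_letter_state [simp]: "D_label (letter_state \<sigma>) = letter_lab \<sigma>"
  by (cases \<sigma>) (simp_all add: letter_state_def letter_lab_def)

lemma letter_state_neq_Dol1 [simp]: "letter_state \<sigma> \<noteq> Dol1"
  by (cases \<sigma>) (simp_all add: letter_state_def)

lemma D_phi_letter_state [simp]:
  "D_phi \<delta> F (letter_state \<sigma>) m = (if m = Mm then Some (pmf_of_set {A1, B1, Dol1}) else None)"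
  by (cases \<sigma>) (simp_all add: letter_state_def)

lemma set_pmf_part1_step [simp]: "set_pmf (pmf_of_set {A1, B1, Dol1}) = {A1, B1, Dol1}"
  by (rule set_pmf_of_set) auto

lemma is_path_word_path: "is_path (D_phi \<delta> F) (word_path u)"
proof (induction u rule: rev_induct)
  case (snoc \<sigma> u)
  have "letter_state \<sigma> \<in> {A1, B1, Dol1}"
    by (cases \<sigma>) (simp_all add: letter_state_def)
  then show ?case
    unfolding word_path_snoc
    by (intro is_path_path_ext[OF snoc, where \<mu> = "pmf_of_set {A1, B1, Dol1}"])
      (simp_all add: path_last_word_path)
qed (simp add: word_path_def)

lemma is_path_s1_word_dollar: "is_path (D_phi \<delta> F) (s1_word_dollar u)"
  unfolding s1_word_dollar_eq
  by (intro is_path_path_ext[OF is_path_word_path, where \<mu> = "pmf_of_set {A1, B1, Dol1}"])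
    (simp_all add: path_last_word_path)

definition sym_step :: "('q \<Rightarrow> letter \<Rightarrow> 'q pmf) \<Rightarrow> 'q set \<Rightarrow> 'q \<Rightarrow> 'q dstate pmf" where
  "sym_step \<delta> F q = bind_pmf (pmf_of_set {Some La, Some Lb, None})
      (\<lambda>c. case c of
             Some \<sigma> \<Rightarrow> map_pmf (Sym \<sigma>) (\<delta> q \<sigma>)
           | None \<Rightarrow> return_pmf (if q \<in> F then DolY else DolX))"

lemma D_phi_Sym: "D_phi \<delta> F (Sym \<sigma> q) Mm = Some (sym_step \<delta> F q)"
  by (simp add: sym_step_def)

lemma set_sym_step: "set_pmf (sym_step \<delta> F q) =
   Sym La ` set_pmf (\<delta> q La) \<union> Sym Lb ` set_pmf (\<delta> q Lb) \<union> {if q \<in> F then DolY else DolX}"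
  by (auto simp: sym_step_def)

lemma nn_integral_sym_step:
  "(\<integral>\<^sup>+v. g v \<partial>measure_pmf (sym_step \<delta> F (q :: 'q :: finite))) =
     ennreal (1/3) * g (if q \<in> F then DolY else DolX) +
     (\<Sum>(\<sigma>, x)\<in>{La, Lb} \<times> UNIV. ennreal (1/3) * ennreal (pmf (\<delta> q \<sigma>) x) * g (Sym \<sigma> x))"
proof -
  have third: "a / 3 = ennreal (1/3) * a" for a :: ennreal
    by (simp add: divide_ennreal[symmetric] ennreal_times_divide mult.commute)
  show ?thesis
    by (simp add: sym_step_def nn_integral_pmf_of_set nn_integral_measure_pmf_UNIV sum_letter_times
        third distrib_left sum_distrib_left mult.assoc add_ac)
qed

lemma is_path_sym_step:
  assumes "is_path (D_phi \<delta> F) t" "path_last t = Sym \<sigma> q" "v \<in> set_pmf (sym_step \<delta> F q)"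
  shows "is_path (D_phi \<delta> F) (path_ext t Mm v)"
  by (rule is_path_path_ext[OF assms(1) _ assms(3)]) (simp only: assms(2) D_phi_Sym)

text \<open>The part-1 successor of \<open>word_path u\<close> carrying the same label as the part-2
  successor \<open>v\<close>; matching successors this way is an optimal coupling.\<close>

definition word_partner :: "letter list \<Rightarrow> ('q dstate, act) path \<Rightarrow> ('q dstate, act) path" where
  "word_partner u v = (case path_last v of Sym \<sigma> _ \<Rightarrow> word_path (u @ [\<sigma>]) | _ \<Rightarrow> s1_word_dollar u)"

lemma word_partner_path_ext [simp]:
  "word_partner u (path_ext t m (Sym \<sigma> x)) = word_path (u @ [\<sigma>])"
  "word_partner u (path_ext t m (if b then DolY else DolX)) = s1_word_dollar u"
  by (simp_all add: word_partner_def)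

lemma map_word_partner_sym_step:
  fixes \<delta> :: "'q \<Rightarrow> letter \<Rightarrow> 'q pmf"
  shows "map_pmf (word_partner u) (map_pmf (path_ext t Mm) (sym_step \<delta> F q)) =
    map_pmf (path_ext (word_path u) Mm) (pmf_of_set {A1, B1, Dol1})"
proof -
  define k where "k c = (case c of Some \<sigma> \<Rightarrow> letter_state \<sigma> | None \<Rightarrow> (Dol1 :: 'q dstate))" for c
  have "map_pmf (word_partner u) (map_pmf (path_ext t Mm) (sym_step \<delta> F q))
      = bind_pmf (pmf_of_set {Some La, Some Lb, None}) (\<lambda>c. return_pmf (path_ext (word_path u) Mm (k c)))"
    unfolding sym_step_def map_pmf_comp map_bind_pmf
    by (intro bind_pmf_cong refl)
      (auto simp: k_def word_partner_def word_path_snoc s1_word_dollar_eq map_pmf_comp split: option.splits)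
  also have "\<dots> = map_pmf (path_ext (word_path u) Mm) (map_pmf k (pmf_of_set {Some La, Some Lb, None}))"
    by (simp add: map_pmf_def bind_assoc_pmf bind_return_pmf)
  also have "map_pmf k (pmf_of_set {Some La, Some Lb, None}) = pmf_of_set {A1, B1, Dol1}"
    by (subst map_pmf_of_set_inj) (auto simp: inj_on_def k_def letter_state_def)
  finally show ?thesis .
qed

section \<open>Distances in the LMC induced by a strategy\<close>

locale D_strategy =
  fixes \<delta> :: "'q :: finite \<Rightarrow> letter \<Rightarrow> 'q pmf" and F :: "'q set"
    and \<alpha> :: "('q dstate, act) path \<Rightarrow> act pmf"
  assumes strategy: "is_strategy (D_phi \<delta> F) \<alpha>"
begin

abbreviation "tau \<equiv> strat_tau (D_phi \<delta> F) \<alpha>"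
abbreviation "lbl \<equiv> strat_label (D_label :: 'q dstate \<Rightarrow> lab)"
abbreviation "bdist \<equiv> lfp (bisim_Delta tau lbl)"

lemma lbl_eq: "lbl \<rho> = D_label (path_last \<rho>)"
  by (simp add: strat_label_def)

lemma strategy_support:
  "is_path (D_phi \<delta> F) \<rho> \<Longrightarrow> set_pmf (\<alpha> \<rho>) \<subseteq> {m. D_phi \<delta> F (path_last \<rho>) m \<noteq> None}"
  using strategy unfolding is_strategy_def by blast

lemma tau_single_action:
  assumes "is_path (D_phi \<delta> F) \<rho>" "path_last \<rho> \<noteq> Dol1"
  shows "tau \<rho> = map_pmf (path_ext \<rho> Mm) (the (D_phi \<delta> F (path_last \<rho>) Mm))"
proof -
  have "set_pmf (\<alpha> \<rho>) \<subseteq> {Mm}"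
    using strategy_support[OF assms(1)] assms(2)
    by (cases "path_last \<rho>") (auto split: if_splits)
  then show ?thesis
    by (simp add: strat_tau_def set_pmf_subset_singleton bind_return_pmf)
qed

lemma tau_Sym:
  "is_path (D_phi \<delta> F) t \<Longrightarrow> path_last t = Sym \<sigma> q \<Longrightarrow> tau t = map_pmf (path_ext t Mm) (sym_step \<delta> F q)"
  by (simp add: tau_single_action sym_step_def)

lemma tau_word_path: "tau (word_path u) = map_pmf (path_ext (word_path u) Mm) (pmf_of_set {A1, B1, Dol1})"
  by (simp add: tau_single_action[OF is_path_word_path] path_last_word_path)

lemma strategy_s1_word_dollar: "set_pmf (\<alpha> (s1_word_dollar u)) \<subseteq> {Mx, My}"
proof
  fix m assume "m \<in> set_pmf (\<alpha> (s1_word_dollar u))"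
  then have "m \<in> {m. D_phi \<delta> F (path_last (s1_word_dollar u)) m \<noteq> None}"
    using strategy_support[OF is_path_s1_word_dollar[of \<delta> F u]] by blast
  then show "m \<in> {Mx, My}"
    by (cases m) simp_all
qed

lemma nn_integral_tau_s1_word_dollar:
  "(\<integral>\<^sup>+x. g x \<partial>measure_pmf (tau (s1_word_dollar u))) =
     (\<integral>\<^sup>+m. g (path_ext (s1_word_dollar u) m (if m = Mx then X1 else Y1)) \<partial>measure_pmf (\<alpha> (s1_word_dollar u)))"
proof -
  let ?s = "s1_word_dollar u"
  have "(\<integral>\<^sup>+x. g x \<partial>measure_pmf (tau ?s)) =
      (\<integral>\<^sup>+m. \<integral>\<^sup>+x. g (path_ext ?s m x) \<partial>measure_pmf (the (D_phi \<delta> F Dol1 m)) \<partial>measure_pmf (\<alpha> ?s))"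
    by (simp add: strat_tau_def)
  also have "\<dots> = (\<integral>\<^sup>+m. g (path_ext ?s m (if m = Mx then X1 else Y1)) \<partial>measure_pmf (\<alpha> ?s))"
    by (intro nn_integral_cong_AE AE_pmfI) (use strategy_s1_word_dollar in auto)
  finally show ?thesis .
qed

definition sink_pair :: "('q dstate, act) path \<Rightarrow> ('q dstate, act) path \<Rightarrow> bool" where
  "sink_pair s t \<longleftrightarrow> is_path (D_phi \<delta> F) s \<and> is_path (D_phi \<delta> F) t \<and>
     (path_last s = X1 \<and> path_last t = X2 \<or> path_last s = Y1 \<and> path_last t = Y2)"

lemma tau_sink:
  assumes "is_path (D_phi \<delta> F) s" "path_last s \<in> {X1, Y1, X2, Y2}"
  shows "tau s = return_pmf (path_ext s Mm (path_last s))"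
    and "is_path (D_phi \<delta> F) (path_ext s Mm (path_last s))"
proof -
  have \<phi>: "D_phi \<delta> F (path_last s) Mm = Some (return_pmf (path_last s))"
    using assms(2) by auto
  have "path_last s \<noteq> Dol1"
    using assms(2) by auto
  then show "tau s = return_pmf (path_ext s Mm (path_last s))"
    by (simp add: tau_single_action[OF assms(1)] \<phi>)
  show "is_path (D_phi \<delta> F) (path_ext s Mm (path_last s))"
    by (rule is_path_path_ext[OF assms(1) \<phi>]) simp
qed

lemma bdist_sink_pair:
  assumes "sink_pair s t"
  shows "bdist (s, t) = 0"
proof -
  define E where "E = (\<lambda>(s, t). if sink_pair s t then 0 else 1 :: ennreal)"
  have "bisim_Delta tau lbl E (s', t') \<le> E (s', t')" for s' t'
  proof (cases "sink_pair s' t'")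
    case True
    then have s': "is_path (D_phi \<delta> F) s'" "path_last s' \<in> {X1, Y1, X2, Y2}"
      and t': "is_path (D_phi \<delta> F) t'" "path_last t' \<in> {X1, Y1, X2, Y2}"
      by (auto simp: sink_pair_def)
    have "sink_pair (path_ext s' Mm (path_last s')) (path_ext t' Mm (path_last t'))"
      using True tau_sink(2)[OF s'] tau_sink(2)[OF t'] by (simp add: sink_pair_def)
    moreover have "lbl s' = lbl t'"
      using True by (auto simp: sink_pair_def lbl_eq)
    ultimately show ?thesis
      by (simp add: bisim_Delta_label_eq tau_sink(1)[OF s'] tau_sink(1)[OF t']
          INF_couplings_return_pmf E_def)
  next
    case False
    have "bisim_Delta tau lbl E (s', t') \<le> 1"
      by (rule bisim_Delta_le_1) (simp add: E_def split: prod.splits)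
    with False show ?thesis
      by (simp add: E_def)
  qed
  then have "bisim_Delta tau lbl E \<le> E"
    by (simp add: le_fun_def)
  then have "bdist \<le> E"
    by (rule lfp_lowerbound)
  then have "bdist (s, t) \<le> E (s, t)"
    by (rule le_funD)
  with assms show ?thesis
    by (simp add: E_def)
qed

text \<open>The probability that the strategy leaves \<open>s1 u $\<close> towards the sink whose label differs
  from that of the sink reached from \<open>$\<^sub>x\<close> or \<open>$\<^sub>y\<close> after \<open>(last u, q)\<close>.\<close>

definition dollar_cost :: "letter list \<Rightarrow> 'q \<Rightarrow> real" where
  "dollar_cost u q = pmf (\<alpha> (s1_word_dollar u)) (if q \<in> F then Mx else My)"

lemma bdist_dollar_exit:
  assumes "is_path (D_phi \<delta> F) v" "path_last v = (if b then Y2 else X2)" "m \<in> {Mx, My}"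
  shows "bdist (path_ext (s1_word_dollar u) m (if m = Mx then X1 else Y1), v) = indicator {if b then Mx else My} m"
proof (cases "m = (if b then Mx else My)")
  case True
  then show ?thesis
    using assms(2) by (cases b) (simp_all add: lbl_eq lfp_bisim_Delta_label_neq)
next
  case False
  have "D_phi \<delta> F (path_last (s1_word_dollar u)) m = Some (return_pmf (if m = Mx then X1 else Y1))"
    using assms(3) by auto
  then have "is_path (D_phi \<delta> F) (path_ext (s1_word_dollar u) m (if m = Mx then X1 else Y1))"
    by (rule is_path_path_ext[OF is_path_s1_word_dollar]) simp
  with False assms show ?thesis
    by (cases b) (auto simp: bdist_sink_pair sink_pair_def)
qed

lemma bdist_dollar:
  assumes t: "is_path (D_phi \<delta> F) t" "path_last t = (if q \<in> F then DolY else DolX)"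
  shows "bdist (s1_word_dollar u, t) = dollar_cost u q"
proof -
  let ?s = "s1_word_dollar u" and ?v = "path_ext t Mm (if q \<in> F then Y2 else X2)"
  have \<phi>: "D_phi \<delta> F (path_last t) Mm = Some (return_pmf (if q \<in> F then Y2 else X2))"
    using t(2) by (cases "q \<in> F") simp_all
  have "lbl ?s = lbl t"
    using t by (simp add: lbl_eq)
  then have "bdist (?s, t) = (\<integral>\<^sup>+x. bdist (x, ?v) \<partial>measure_pmf (tau ?s))"
    by (subst lfp_bisim_Delta_unfold)
      (simp add: bisim_Delta_label_eq tau_single_action[OF t(1)] t(2) \<phi> INF_couplings_return_pmf)
  also have "\<dots> = (\<integral>\<^sup>+m. indicator {if q \<in> F then Mx else My} m \<partial>measure_pmf (\<alpha> ?s))"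
    unfolding nn_integral_tau_s1_word_dollar
    using is_path_path_ext[OF t(1) \<phi>] strategy_s1_word_dollar[of u]
    by (intro nn_integral_cong_AE AE_pmfI bdist_dollar_exit) auto
  also have "\<dots> = dollar_cost u q"
    by (simp add: dollar_cost_def emeasure_pmf_single)
  finally show ?thesis .
qed

lemma bdist_word_path_partner:
  assumes t: "is_path (D_phi \<delta> F) t" "path_last t = Sym (last (La # u)) q"
  shows "bdist (word_path u, t) = (\<integral>\<^sup>+v. bdist (word_partner u v, v) \<partial>measure_pmf (tau t))"
proof -
  have lab: "lbl (word_path u) = lbl t"
    using t by (simp add: lbl_eq path_last_word_path)
  have "bdist (word_path u, t) =
      (INF \<omega>\<in>couplings (tau (word_path u)) (tau t). \<integral>\<^sup>+uv. bdist uv \<partial>measure_pmf \<omega>)"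
    by (subst lfp_bisim_Delta_unfold) (rule bisim_Delta_label_eq[where lbl = lbl, OF lab])
  also have "\<dots> = (\<integral>\<^sup>+v. bdist (word_partner u v, v) \<partial>measure_pmf (tau t))"
  proof (rule antisym)
    show "(INF \<omega>\<in>couplings (tau (word_path u)) (tau t). \<integral>\<^sup>+uv. bdist uv \<partial>measure_pmf \<omega>)
        \<le> (\<integral>\<^sup>+v. bdist (word_partner u v, v) \<partial>measure_pmf (tau t))"
      by (rule INF_couplings_le_nn_integral)
        (simp add: tau_Sym[OF t] tau_word_path map_word_partner_sym_step)
  next
    show "(\<integral>\<^sup>+v. bdist (word_partner u v, v) \<partial>measure_pmf (tau t))
        \<le> (INF \<omega>\<in>couplings (tau (word_path u)) (tau t). \<integral>\<^sup>+uv. bdist uv \<partial>measure_pmf \<omega>)"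
    proof (rule nn_integral_le_INF_couplings)
      fix u' v assume u': "u' \<in> set_pmf (tau (word_path u))" and v: "v \<in> set_pmf (tau t)"
      show "bdist (word_partner u v, v) \<le> bdist (u', v)"
      proof (cases "lbl u' = lbl v")
        case True
        from u' obtain a where a: "a \<in> {A1, B1, Dol1}" "u' = path_ext (word_path u) Mm a"
          by (auto simp: tau_word_path)
        from v obtain b where b: "b \<in> set_pmf (sym_step \<delta> F q)" "v = path_ext t Mm b"
          by (auto simp: tau_Sym[OF t])
        from True a b have "u' = word_partner u v"
          by (auto simp: lbl_eq set_sym_step word_partner_def word_path_snoc s1_word_dollar_eq
              letter_state_def letter_lab_def split: if_splits)
        then show ?thesis by simp
      qed (simp add: lfp_bisim_Delta_label_neq lfp_bisim_Delta_le_1)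
    qed
  qed
  finally show ?thesis .
qed

lemma bdist_word_path_unfold:
  assumes t: "is_path (D_phi \<delta> F) t" "path_last t = Sym (last (La # u)) q"
  shows "bdist (word_path u, t) = ennreal (1/3) * ennreal (dollar_cost u q) +
     (\<Sum>(\<sigma>, x)\<in>{La, Lb} \<times> UNIV. ennreal (1/3) * ennreal (pmf (\<delta> q \<sigma>) x) *
        bdist (word_path (u @ [\<sigma>]), path_ext t Mm (Sym \<sigma> x)))"
proof -
  have "bdist (s1_word_dollar u, path_ext t Mm (if q \<in> F then DolY else DolX)) = dollar_cost u q"
    by (rule bdist_dollar, rule is_path_sym_step[OF t]) (simp_all add: set_sym_step)
  then show ?thesis
    by (simp add: bdist_word_path_partner[OF t] tau_Sym[OF t] nn_integral_sym_step)
qed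

definition matched :: "(letter list \<times> ('q dstate, act) path \<times> 'q) set" where
  "matched = {(u, t, q). is_path (D_phi \<delta> F) t \<and> path_last t = Sym (last (La # u)) q}"

definition step_weight :: "letter list \<times> ('q dstate, act) path \<times> 'q \<Rightarrow> letter \<times> 'q \<Rightarrow> ennreal" where
  "step_weight = (\<lambda>(u, t, q) (\<sigma>, x). ennreal (1/3) * ennreal (pmf (\<delta> q \<sigma>) x))"

definition step_child ::
    "letter list \<times> ('q dstate, act) path \<times> 'q \<Rightarrow> letter \<times> 'q \<Rightarrow> letter list \<times> ('q dstate, act) path \<times> 'q"
  where "step_child = (\<lambda>(u, t, q) (\<sigma>, x). (u @ [\<sigma>], path_ext t Mm (Sym \<sigma> x), x))"

lemma sum_step_weight: "(\<Sum>y\<in>{La, Lb} \<times> UNIV. step_weight x y) = ennreal (2/3)"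
proof -
  obtain u t q where x: "x = (u, t, q)"
    by (cases x) auto
  have "(\<Sum>y\<in>{La, Lb} \<times> UNIV. step_weight x y) =
      (\<Sum>(\<sigma>, x')\<in>{La, Lb} \<times> UNIV. ennreal (1/3) * ennreal (pmf (\<delta> q \<sigma>) x'))"
    by (simp add: x step_weight_def)
  also have "\<dots> = ennreal (1/3) * (\<Sum>x'\<in>UNIV. ennreal (pmf (\<delta> q La) x'))
      + ennreal (1/3) * (\<Sum>x'\<in>UNIV. ennreal (pmf (\<delta> q Lb) x'))"
    by (simp only: sum_letter_times sum_distrib_left)
  also have "\<dots> = ennreal (2/3)"
    by (simp add: sum_ennreal_pmf_UNIV flip: ennreal_plus)
  finally show ?thesis .
qed

lemma step_child_matched:
  assumes "x \<in> matched" "y \<in> {La, Lb} \<times> UNIV" "step_weight x y \<noteq> 0"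
  shows "step_child x y \<in> matched"
proof -
  obtain u t q \<sigma> x' where xy: "x = (u, t, q)" "y = (\<sigma>, x')"
    by (cases x, cases y) auto
  with assms have t: "is_path (D_phi \<delta> F) t" "path_last t = Sym (last (La # u)) q"
    and "\<sigma> \<in> {La, Lb}" "pmf (\<delta> q \<sigma>) x' \<noteq> 0"
    by (auto simp: matched_def step_weight_def)
  then have "Sym \<sigma> x' \<in> set_pmf (sym_step \<delta> F q)"
    by (auto simp: set_sym_step set_pmf_iff)
  with t show ?thesis
    by (simp add: xy matched_def step_child_def is_path_sym_step)
qed

lemma bdist_word_path_eq_cost_series:
  assumes "is_path (D_phi \<delta> F) t" "path_last t = Sym (last (La # u)) q"
  shows "bdist (word_path u, t) = cost_series \<delta> (\<lambda>u q. ennreal (dollar_cost u q)) u q"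
proof -
  let ?B = "{La, Lb} \<times> (UNIV :: 'q set)"
  define a where "a = (\<lambda>(u, t :: ('q dstate, act) path, q). ennreal (1/3) * ennreal (dollar_cost u q))"
  define f where "f = (\<lambda>(u, t, q :: 'q). bdist (word_path u, t))"
  define g where "g = (\<lambda>(u, t :: ('q dstate, act) path, q). cost_series \<delta> (\<lambda>u q. ennreal (dollar_cost u q)) u q)"
  have f_rec: "f x = a x + (\<Sum>y\<in>?B. step_weight x y * f (step_child x y))" if "x \<in> matched" for x
    using that
    by (auto simp: matched_def f_def a_def step_weight_def step_child_def bdist_word_path_unfold split_def)
  have g_rec: "g x = a x + (\<Sum>y\<in>?B. step_weight x y * g (step_child x y))" for x
    by (cases x) (simp add: g_def a_def step_weight_def step_child_def,
        subst cost_series_unfold, simp add: split_def)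
  have "f (u, t, q) = g (u, t, q)"
  proof (rule eq_by_contraction[where k = "2/3" and B = ?B and w = step_weight and ch = step_child and a = a])
    show "(u, t, q) \<in> matched"
      using assms by (simp add: matched_def)
    show "f x \<le> 1" for x
      by (simp add: f_def split_def lfp_bisim_Delta_le_1)
    show "g x \<le> 1" for x
      by (auto simp: g_def split_def dollar_cost_def pmf_le_1 intro: cost_series_le_1)
  qed (rule g_rec | erule f_rec | simp add: sum_step_weight step_child_matched)+
  then show ?thesis
    by (simp add: f_def g_def)
qed

lemma cost_term_dollar_cost:
  "cost_term \<delta> (\<lambda>u q. ennreal (dollar_cost u q)) [] q0 w =
     ennreal ((1 / 3 ^ (length w + 1)) *
       ((1 - PA_Pr q0 \<delta> F w) * pmf (\<alpha> (s1_word_dollar w)) My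
        + PA_Pr q0 \<delta> F w * pmf (\<alpha> (s1_word_dollar w)) Mx))"
proof -
  let ?M = "delta_word \<delta> q0 w"
  have split: "(\<Sum>q\<in>UNIV. h q) = (\<Sum>q\<in>F. h q) + (\<Sum>q\<in>- F. h q)" for h :: "'q \<Rightarrow> real"
    by (metis Compl_eq_Diff_UNIV add.commute finite sum.subset_diff top_greatest)
  have "(\<Sum>q\<in>UNIV. pmf ?M q * dollar_cost w q)
      = (\<Sum>q\<in>F. pmf ?M q) * pmf (\<alpha> (s1_word_dollar w)) Mx
        + (\<Sum>q\<in>- F. pmf ?M q) * pmf (\<alpha> (s1_word_dollar w)) My"
    unfolding split[of "\<lambda>q. pmf ?M q * dollar_cost w q"] by (simp add: dollar_cost_def sum_distrib_right)
  also have "(\<Sum>q\<in>- F. pmf ?M q) = 1 - (\<Sum>q\<in>F. pmf ?M q)"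
    using split[of "pmf ?M"] by (simp add: sum_pmf_eq_1)
  finally have real_sum: "(\<Sum>q\<in>UNIV. pmf ?M q * dollar_cost w q)
      = (\<Sum>q\<in>F. pmf ?M q) * pmf (\<alpha> (s1_word_dollar w)) Mx
        + (1 - (\<Sum>q\<in>F. pmf ?M q)) * pmf (\<alpha> (s1_word_dollar w)) My" .
  have "(\<Sum>q\<in>UNIV. ennreal (pmf ?M q) * ennreal (dollar_cost w q)) =
      ennreal (\<Sum>q\<in>UNIV. pmf ?M q * dollar_cost w q)"
    by (simp add: sum_ennreal[symmetric] ennreal_mult dollar_cost_def)
  also have "\<dots> = ennreal ((1 - PA_Pr q0 \<delta> F w) * pmf (\<alpha> (s1_word_dollar w)) My
        + PA_Pr q0 \<delta> F w * pmf (\<alpha> (s1_word_dollar w)) Mx)"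
    by (simp only: real_sum PA_Pr_def add.commute)
  finally show ?thesis
    by (simp add: cost_term_def ennreal_mult'[symmetric])
qed

end

theorem mainTheorem6:
  fixes q0 :: "'q::finite"
    and \<delta> :: "'q \<Rightarrow> letter \<Rightarrow> 'q pmf"
    and F :: "'q set"
    and \<alpha> :: "('q dstate, act) path \<Rightarrow> act pmf"
  assumes "q0 \<notin> F"
    and "is_strategy (D_phi \<delta> F) \<alpha>"
  shows "bisim_dist (strat_tau (D_phi \<delta> F) \<alpha>) (strat_label D_label)
            (A1, []) (Sym La q0, [])
       = (\<Sum>\<^sub>\<infinity> w :: letter list.
            ennreal ((1 / 3 ^ (length w + 1)) *
              ((1 - PA_Pr q0 \<delta> F w) * pmf (\<alpha> (s1_word_dollar w)) My
               + PA_Pr q0 \<delta> F w * pmf (\<alpha> (s1_word_dollar w)) Mx)))"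
proof -
  interpret D_strategy \<delta> F \<alpha>
    by unfold_locales (rule assms(2))
  have "bisim_dist (strat_tau (D_phi \<delta> F) \<alpha>) (strat_label D_label) (A1, []) (Sym La q0, [])
      = bdist (word_path [], (Sym La q0, []))"
    by (simp add: bisim_dist_def word_path_def)
  also have "\<dots> = cost_series \<delta> (\<lambda>u q. ennreal (dollar_cost u q)) [] q0"
    by (rule bdist_word_path_eq_cost_series) (simp_all add: path_last_def)
  also have "\<dots> = (\<Sum>\<^sub>\<infinity> w :: letter list.
            ennreal ((1 / 3 ^ (length w + 1)) *
              ((1 - PA_Pr q0 \<delta> F w) * pmf (\<alpha> (s1_word_dollar w)) My
               + PA_Pr q0 \<delta> F w * pmf (\<alpha> (s1_word_dollar w)) Mx)))"
    unfolding cost_series_def cost_term_dollar_cost ..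
  finally show ?thesis .
qed

end
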